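(* Let $k$ be an algebraically closed field, $\beta$ a basis set of $n$ monomials in $k[x_1,\dots,x_r]$, $R$ the coordinate ring of $U_\beta$ and $M\subseteq R$ the maximal ideal of the point $t_\beta$. Let $S$ be a finite set of $d$ arrows $c^{\mathbf d}_{\mathbf j}$ for $\beta$. Then the $k$-span of (the images of) $S$ in $M/M^2$ has dimension $d$ if and only if both of the following hold: (a) $c^{\mathbf d}_{\mathbf j}\not\sim 0$ for every $c^{\mathbf d}_{\mathbf j}\in S$; (b) $c^{\mathbf d_1}_{\mathbf j_1}\not\sim c^{\mathbf d_2}_{\mathbf j_2}$ for all distinct $c^{\mathbf d_1}_{\mathbf j_1}\neq c^{\mathbf d_2}_{\mathbf j_2}$ in $S$.
   Context: Monomials $\mathbf x^{\mathbf d}=x_1^{d_1}\cdots x_r^{d_r}$ are identified with exponent vectors $\mathbf d\in\mathbb Z_{\ge0}^r$. A basis set is a finite nonempty set $\beta$ of monomials such that $m_1\in\beta$, $m_2\mid m_1$ implies $m_2\in\beta$; $I_\beta$ is the ideal generated by all monomials not in $\beta$ (colength $n=|\beta|$). $\mathbf H^n$ is the Hilbert scheme of $n$ points of $\mathbb A^r_k$, $t_\beta$ the point corresponding to $I_\beta$, and $U_\beta\subseteq\mathbf H^n$ the open affine subscheme of points $t$ for which $\beta$ is a $k$-basis of $k[\mathbf x]/I_t$, with coordinate ring $R$. For $\mathbf x^{\mathbf d}\notin\beta$, $\mathbf x^{\mathbf j}\in\beta$, $c^{\mathbf d}_{\mathbf j}\in R$ is the function with $\mathbf x^{\mathbf d}-\sum_{\mathbf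 j\in\beta}c^{\mathbf d}_{\mathbf j}(t)\mathbf x^{\mathbf j}\in I_t$ for all $t\in U_\beta$; $M$ is the maximal ideal of $t_\beta$ (generated by these functions). An arrow is such a pair $(\mathbf d,\mathbf j)$ (tail $\mathbf x^{\mathbf d}\notin\beta$, head $\mathbf x^{\mathbf j}\in\beta$), denoted and identified with $c^{\mathbf d}_{\mathbf j}$. A translation step replaces $(\mathbf d,\mathbf j)$ by $(\mathbf d\pm e_i,\mathbf j\pm e_i)$ for some $i$, provided the result is again an arrow (nonnegative exponents, head in $\beta$, tail not in $\beta$); two arrows are translation-equivalent ($\sim$) if one is reachable from the other by finitely many steps. We write $c\sim0$ if $c$ is translation-equivalent to an arrow $(\mathbf d',\mathbf j')$ such that for some $i$: $j'_i=0$, $d'_i\ge1$ and $\mathbf x^{\mathbf d'-e_i}\notin\beta$ (i.e. one more step in the decreasing $x_i$-direction would move the head out of the first orthant while the tail stays outside $\beta$). *)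

theory Defs
  imports "HOL-Library.Poly_Mapping" "HOL-Computational_Algebra.Polynomial"
begin

text \<open>Exponent vectors of monomials in k[x_1..x_r] are functions nat => nat vanishing
  outside the indices 0..r-1 (index i stands for the variable x_(i+1)).\<close>

type_synonym expv = "nat \<Rightarrow> nat"

definition monoms :: "nat \<Rightarrow> expv set" where
  "monoms r = {d. \<forall>i\<ge>r. d i = 0}"

definition unitv :: "nat \<Rightarrow> expv" where
  "unitv i = (\<lambda>l. if l = i then 1 else 0)"

definition vadd :: "expv \<Rightarrow> expv \<Rightarrow> expv" where
  "vadd a b = (\<lambda>l. a l + b l)"

definition vsub :: "expv \<Rightarrow> expv \<Rightarrow> expv" where
  "vsub a b = (\<lambda>l. a l - b l)"

definition mdvd :: "expv \<Rightarrow> expv \<Rightarrow> bool" where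
  "mdvd a b \<longleftrightarrow> (\<forall>i. a i \<le> b i)"

definition basis_set :: "nat \<Rightarrow> expv set \<Rightarrow> bool" where
  "basis_set r \<beta> \<longleftrightarrow> finite \<beta> \<and> \<beta> \<noteq> {} \<and> \<beta> \<subseteq> monoms r \<and>
     (\<forall>m1\<in>\<beta>. \<forall>m2\<in>monoms r. mdvd m2 m1 \<longrightarrow> m2 \<in> \<beta>)"

text \<open>An arrow (d, j): tail x^d outside beta, head x^j in beta.\<close>
definition arrows :: "nat \<Rightarrow> expv set \<Rightarrow> (expv \<times> expv) set" where
  "arrows r \<beta> = {(d, j). d \<in> monoms r \<and> d \<notin> \<beta> \<and> j \<in> \<beta>}"

definition tstep :: "nat \<Rightarrow> expv set \<Rightarrow> expv \<times> expv \<Rightarrow> expv \<times> expv \<Rightarrow> bool" where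
  "tstep r \<beta> a b \<longleftrightarrow> a \<in> arrows r \<beta> \<and> b \<in> arrows r \<beta> \<and>
     (\<exists>i<r. b = (vadd (fst a) (unitv i), vadd (snd a) (unitv i)) \<or> a = (vadd (fst b) (unitv i), vadd (snd b) (unitv i)))"

definition tequiv :: "nat \<Rightarrow> expv set \<Rightarrow> expv \<times> expv \<Rightarrow> expv \<times> expv \<Rightarrow> bool" where
  "tequiv r \<beta> a b \<longleftrightarrow> a \<in> arrows r \<beta> \<and> (tstep r \<beta>)\<^sup>*\<^sup>* a b"

definition sim0 :: "nat \<Rightarrow> expv set \<Rightarrow> expv \<times> expv \<Rightarrow> bool" where
  "sim0 r \<beta> c \<longleftrightarrow> (\<exists>d' j'. tequiv r \<beta> c (d', j') \<and>
      (\<exists>i<r. j' i = 0 \<and> d' i \<ge> 1 \<and> vsub d' (unitv i) \<notin> \<beta>))"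

text \<open>Polynomial ring P over k in variables indexed by pairs of exponent vectors
  (only arrows will survive in R).\<close>
type_synonym 'k cpoly = "((expv \<times> expv) \<Rightarrow>\<^sub>0 nat) \<Rightarrow>\<^sub>0 'k"

definition cvar :: "expv \<times> expv \<Rightarrow> 'k::comm_ring_1 cpoly" where
  "cvar v = Poly_Mapping.single (Poly_Mapping.single v 1) 1"

definition cconst :: "'k::comm_ring_1 \<Rightarrow> 'k cpoly" where
  "cconst c = Poly_Mapping.single 0 c"

definition ideal_gen :: "'a::comm_ring_1 set \<Rightarrow> 'a set" where
  "ideal_gen G = {\<Sum>i\<in>F. f i * i | F f. finite F \<and> F \<subseteq> G}"

definition cC :: "expv set \<Rightarrow> expv \<Rightarrow> expv \<Rightarrow> 'k::comm_ring_1 cpoly" where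
  "cC \<beta> m l = (if m \<in> \<beta> then (if m = l then 1 else 0) else cvar (m, l))"

text \<open>Relations defining U_beta: the span of x^d - sum_j c^d_j x^j is stable under
  multiplication by each x_i; non-arrow variables are killed.\<close>
definition hilb_rels :: "nat \<Rightarrow> expv set \<Rightarrow> 'k::comm_ring_1 cpoly set" where
  "hilb_rels r \<beta> =
     {cvar (vadd d (unitv i), l) - (\<Sum>j\<in>\<beta>. cvar (d, j) * cC \<beta> (vadd j (unitv i)) l)
        | d i l. d \<in> monoms r \<and> d \<notin> \<beta> \<and> i < r \<and> l \<in> \<beta>}
     \<union> {cvar v | v. v \<notin> arrows r \<beta>}"

text \<open>R = P / J with J the ideal generated by the relations.\<close>
definition hilb_ideal :: "nat \<Rightarrow> expv set \<Rightarrow> 'k::comm_ring_1 cpoly set" where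
  "hilb_ideal r \<beta> = ideal_gen (hilb_rels r \<beta>)"

text \<open>Ideal of t_beta in P (all arrow coordinates vanish); its image in R is M.\<close>
definition pt_ideal :: "nat \<Rightarrow> expv set \<Rightarrow> 'k::comm_ring_1 cpoly set" where
  "pt_ideal r \<beta> = ideal_gen (cvar ` arrows r \<beta>)"

text \<open>Preimage in P of M^2 subset R: J + m^2.\<close>
definition Msq_preimage :: "nat \<Rightarrow> expv set \<Rightarrow> 'k::comm_ring_1 cpoly set" where
  "Msq_preimage r \<beta> =
     ideal_gen (hilb_rels r \<beta> \<union> {p * q | p q. p \<in> pt_ideal r \<beta> \<and> q \<in> pt_ideal r \<beta>})"

text \<open>The images of the arrows in S in M/M^2 span a k-subspace of dimension |S|, i.e.
  they are k-linearly independent (as a family indexed by S) in M/M^2 = (m+J)/(m^2+J).\<close>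
definition cotangent_indep :: "'k::field itself \<Rightarrow> nat \<Rightarrow> expv set \<Rightarrow> (expv \<times> expv) set \<Rightarrow> bool" where
  "cotangent_indep _ r \<beta> S \<longleftrightarrow>
     (\<forall>coef::expv \<times> expv \<Rightarrow> 'k.
        (\<Sum>a\<in>S. cconst (coef a) * cvar a) \<in> Msq_preimage r \<beta> \<longrightarrow> (\<forall>a\<in>S. coef a = 0))"

end

(* Modulo products of two coordinates, the relation of U_beta attached to x^d, x_i and x^l says
   c^(d+e_i)_l = c^d_(l-e_i) if l_i >= 1 and c^(d+e_i)_l = 0 if l_i = 0.  Hence in M/M^2
   translation-equivalent arrows coincide and an arrow ~ 0 vanishes, which gives necessity.
   Conversely, let C be the translation class of an arrow a with a not ~ 0.  By the Leibniz rule at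
   the origin, the tangent vector p |-> sum over b in C of (d p / d c_b)(0) kills M^2, and by the
   description of the relations it kills them too; so it is a linear form on M/M^2 that takes the
   value 1 on a and 0 on every arrow outside C.  Translation classes are finite because the tail of
   an arrow is its head shifted by a fixed vector. *)

theory Submission
  imports Defs
begin

section \<open>Constant and linear coefficients of polynomials\<close>

lemma poly_mapping_add_eq_0_iff:
  fixes l q :: "'v \<Rightarrow>\<^sub>0 nat"
  shows "l + q = 0 \<longleftrightarrow> l = 0 \<and> q = 0"
proof
  assume "l + q = 0"
  then have "Poly_Mapping.lookup l x + Poly_Mapping.lookup q x = 0" for x
    by (metis lookup_add lookup_zero)
  then show "l = 0 \<and> q = 0"
    by (simp add: poly_mapping_eqI)
qed simp

lemma poly_mapping_add_eq_single_one_iff: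
  fixes l q :: "'v \<Rightarrow>\<^sub>0 nat"
  shows "l + q = Poly_Mapping.single v 1 \<longleftrightarrow>
    (l = 0 \<and> q = Poly_Mapping.single v 1) \<or> (l = Poly_Mapping.single v 1 \<and> q = 0)"
proof
  assume sum: "l + q = Poly_Mapping.single v 1"
  then have pointwise: "Poly_Mapping.lookup l x + Poly_Mapping.lookup q x = (1 when v = x)" for x
    by (metis lookup_add lookup_single)
  have "Poly_Mapping.lookup l x = 0 \<and> Poly_Mapping.lookup q x = 0" if "x \<noteq> v" for x
    using pointwise[of x] that by simp
  then have "l = Poly_Mapping.single v (Poly_Mapping.lookup l v)"
    "q = Poly_Mapping.single v (Poly_Mapping.lookup q v)"
    by (auto intro!: poly_mapping_eqI simp: lookup_single when_def)
  moreover have "Poly_Mapping.lookup l v = 0 \<and> Poly_Mapping.lookup q v = 1 \<or>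
      Poly_Mapping.lookup l v = 1 \<and> Poly_Mapping.lookup q v = 0"
    using pointwise[of v] by simp arith
  ultimately show "(l = 0 \<and> q = Poly_Mapping.single v 1) \<or> (l = Poly_Mapping.single v 1 \<and> q = 0)"
    by (metis single_zero)
qed auto

lemma lookup_mult_0:
  fixes f g :: "('v \<Rightarrow>\<^sub>0 nat) \<Rightarrow>\<^sub>0 'k::comm_semiring_0"
  shows "Poly_Mapping.lookup (f * g) 0 = Poly_Mapping.lookup f 0 * Poly_Mapping.lookup g 0"
proof -
  have inner: "(\<Sum>q. Poly_Mapping.lookup g q when 0 = l + q) = (Poly_Mapping.lookup g 0 when l = 0)" for l
    by (simp add: eq_commute[of 0] poly_mapping_add_eq_0_iff when_def conj_commute)
  have "Poly_Mapping.lookup (f * g) 0 = (\<Sum>l. Poly_Mapping.lookup f l * Poly_Mapping.lookup g 0 when l = 0)"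
    by (simp only: lookup_mult inner mult_when)
  also have "\<dots> = Poly_Mapping.lookup f 0 * Poly_Mapping.lookup g 0"
    by (simp add: when_def)
  finally show ?thesis .
qed

lemma lookup_mult_single_one:
  fixes f g :: "('v \<Rightarrow>\<^sub>0 nat) \<Rightarrow>\<^sub>0 'k::comm_semiring_0" and v :: 'v
  defines "k \<equiv> Poly_Mapping.single v 1"
  shows "Poly_Mapping.lookup (f * g) k =
    Poly_Mapping.lookup f 0 * Poly_Mapping.lookup g k + Poly_Mapping.lookup f k * Poly_Mapping.lookup g 0"
proof -
  have "k \<noteq> 0"
    by (metis k_def lookup_single_eq lookup_zero zero_neq_one)
  have "k = l + q \<longleftrightarrow> (l = 0 \<and> q = k) \<or> (l = k \<and> q = 0)" for l q
    unfolding k_def by (metis poly_mapping_add_eq_single_one_iff)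
  then have "(\<Sum>q. Poly_Mapping.lookup g q when k = l + q) =
      (Poly_Mapping.lookup g k when l = 0) + (Poly_Mapping.lookup g 0 when l = k)" for l
    using \<open>k \<noteq> 0\<close> by (auto simp: when_def)
  then have "Poly_Mapping.lookup (f * g) k = (\<Sum>l.
      Poly_Mapping.lookup f l * ((Poly_Mapping.lookup g k when l = 0) + (Poly_Mapping.lookup g 0 when l = k)))"
    by (simp only: lookup_mult)
  also have "\<dots> = (\<Sum>l\<in>{0, k}.
      Poly_Mapping.lookup f l * ((Poly_Mapping.lookup g k when l = 0) + (Poly_Mapping.lookup g 0 when l = k)))"
    by (rule Sum_any.expand_superset) (auto simp: when_def)
  also have "\<dots> =
      Poly_Mapping.lookup f 0 * Poly_Mapping.lookup g k + Poly_Mapping.lookup f k * Poly_Mapping.lookup g 0"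
    using \<open>k \<noteq> 0\<close> by simp
  finally show ?thesis .
qed

lemma single_eq_single_iff:
  "c \<noteq> 0 \<Longrightarrow> Poly_Mapping.single a c = Poly_Mapping.single b c \<longleftrightarrow> a = b"
  by (metis lookup_single_eq lookup_single_not_eq)

(* The tangent vector sum_(b in C) d/dc_b at the origin. *)
definition lin_coeff :: "'v set \<Rightarrow> (('v \<Rightarrow>\<^sub>0 nat) \<Rightarrow>\<^sub>0 'k::comm_semiring_0) \<Rightarrow> 'k" where
  "lin_coeff C p = (\<Sum>b\<in>C. Poly_Mapping.lookup p (Poly_Mapping.single b 1))"

lemma lin_coeff_mult:
  "lin_coeff C (f * g) =
    Poly_Mapping.lookup f 0 * lin_coeff C g + lin_coeff C f * Poly_Mapping.lookup g 0"
  unfolding lin_coeff_def lookup_mult_single_one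
  by (simp add: sum.distrib sum_distrib_left sum_distrib_right)

lemma lin_coeff_sum: "lin_coeff C (sum f A) = (\<Sum>a\<in>A. lin_coeff C (f a))"
  unfolding lin_coeff_def lookup_sum by (rule sum.swap)

lemma lin_coeff_0 [simp]: "lin_coeff C 0 = 0"
  by (simp add: lin_coeff_def)

lemma lin_coeff_add: "lin_coeff C (p + q) = lin_coeff C p + lin_coeff C q"
  by (simp add: lin_coeff_def lookup_add sum.distrib)

lemma lin_coeff_diff:
  "lin_coeff C (p - q :: ('v \<Rightarrow>\<^sub>0 nat) \<Rightarrow>\<^sub>0 'k::comm_ring) = lin_coeff C p - lin_coeff C q"
  by (simp add: lin_coeff_def lookup_minus sum_subtractf)

lemma lookup_0_ideal_gen:
  fixes G :: "(('v \<Rightarrow>\<^sub>0 nat) \<Rightarrow>\<^sub>0 'k::comm_ring_1) set"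
  assumes "\<And>g. g \<in> G \<Longrightarrow> Poly_Mapping.lookup g 0 = 0" and "p \<in> ideal_gen G"
  shows "Poly_Mapping.lookup p 0 = 0"
  using assms unfolding ideal_gen_def by (fastforce simp: lookup_sum lookup_mult_0 intro!: sum.neutral)

lemma lin_coeff_ideal_gen:
  fixes G :: "(('v \<Rightarrow>\<^sub>0 nat) \<Rightarrow>\<^sub>0 'k::comm_ring_1) set"
  assumes "\<And>g. g \<in> G \<Longrightarrow> Poly_Mapping.lookup g 0 = 0 \<and> lin_coeff C g = 0"
    and "p \<in> ideal_gen G"
  shows "lin_coeff C p = 0"
  using assms unfolding ideal_gen_def by (fastforce simp: lin_coeff_sum lin_coeff_mult intro!: sum.neutral)

lemma lookup_cvar_0: "Poly_Mapping.lookup (cvar v :: 'k::comm_ring_1 cpoly) 0 = 0"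
proof -
  have "Poly_Mapping.single v (1::nat) \<noteq> 0"
    by (metis lookup_single_eq lookup_zero zero_neq_one)
  then show ?thesis
    by (simp add: cvar_def lookup_single)
qed

lemma lin_coeff_cvar:
  "finite C \<Longrightarrow> lin_coeff C (cvar v :: 'k::comm_ring_1 cpoly) = (if v \<in> C then 1 else 0)"
  by (simp add: lin_coeff_def cvar_def lookup_single when_def single_eq_single_iff)

lemma lin_coeff_cconst_mult_cvar:
  "finite C \<Longrightarrow> lin_coeff C (cconst c * cvar v :: 'k::comm_ring_1 cpoly) = (if v \<in> C then c else 0)"
  by (simp add: lin_coeff_mult lin_coeff_cvar lookup_cvar_0 cconst_def)

interpretation ring_self: module "(*) :: 'a::comm_ring_1 \<Rightarrow> 'a \<Rightarrow> 'a"
  by standard (auto simp: algebra_simps)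

lemma ideal_gen_eq_span: "ideal_gen G = ring_self.span G"
  unfolding ideal_gen_def ring_self.span_explicit by blast

lemma vadd_unitv_monoms: "d \<in> monoms r \<Longrightarrow> i < r \<Longrightarrow> vadd d (unitv i) \<in> monoms r"
  by (auto simp: monoms_def vadd_def unitv_def)

lemma vsub_unitv_monoms: "d \<in> monoms r \<Longrightarrow> vsub d (unitv i) \<in> monoms r"
  by (auto simp: monoms_def vsub_def unitv_def)

lemma vadd_vsub_unitv: "1 \<le> l i \<Longrightarrow> vadd (vsub l (unitv i)) (unitv i) = l"
  by (auto simp: fun_eq_iff vadd_def vsub_def unitv_def)

lemma vsub_vadd_unitv: "vsub (vadd d (unitv i)) (unitv i) = d"
  by (auto simp: fun_eq_iff vadd_def vsub_def unitv_def)

lemma vadd_unitv_same: "vadd d (unitv i) i = d i + 1"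
  by (simp add: vadd_def unitv_def)

lemma vadd_unitv_eq_iff: "vadd j (unitv i) = l \<longleftrightarrow> 1 \<le> l i \<and> j = vsub l (unitv i)"
  using vadd_unitv_same vadd_vsub_unitv vsub_vadd_unitv by (metis le_add2)

lemma basis_set_vsub_unitv: "basis_set r \<beta> \<Longrightarrow> l \<in> \<beta> \<Longrightarrow> vsub l (unitv i) \<in> \<beta>"
  unfolding basis_set_def
  by (metis (no_types, lifting) diff_le_self mdvd_def subsetD vsub_def vsub_unitv_monoms)

lemma basis_set_vadd_unitv_notin:
  "basis_set r \<beta> \<Longrightarrow> d \<in> monoms r \<Longrightarrow> d \<notin> \<beta> \<Longrightarrow> vadd d (unitv i) \<notin> \<beta>"
  unfolding basis_set_def by (metis (no_types, lifting) le_add1 mdvd_def vadd_def)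

lemma tstep_sym: "tstep r \<beta> a b \<Longrightarrow> tstep r \<beta> b a"
  unfolding tstep_def by blast

lemma tequiv_refl: "a \<in> arrows r \<beta> \<Longrightarrow> tequiv r \<beta> a a"
  by (simp add: tequiv_def)

lemma tequiv_tstep_iff: "tstep r \<beta> b c \<Longrightarrow> tequiv r \<beta> a b \<longleftrightarrow> tequiv r \<beta> a c"
  unfolding tequiv_def by (meson rtranclp.rtrancl_into_rtrancl tstep_sym)

lemma tequiv_arrows:
  assumes "tequiv r \<beta> a b"
  shows "b \<in> arrows r \<beta>"
proof -
  have "(tstep r \<beta>)\<^sup>*\<^sup>* a b" "a \<in> arrows r \<beta>"
    using assms by (simp_all add: tequiv_def)
  then show ?thesis
    by (induction rule: rtranclp_induct) (auto simp: tstep_def)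
qed

lemma tequiv_tail_minus_head:
  assumes "tequiv r \<beta> a b"
  shows "int (fst a x) - int (snd a x) = int (fst b x) - int (snd b x)"
proof -
  have "(tstep r \<beta>)\<^sup>*\<^sup>* a b"
    using assms by (simp add: tequiv_def)
  then show ?thesis
    by (induction rule: rtranclp_induct) (auto simp: tstep_def vadd_def)
qed

lemma tequiv_class_finite:
  assumes "basis_set r \<beta>"
  shows "finite {b. tequiv r \<beta> a b}"
proof (rule finite_imageD)
  show "inj_on snd {b. tequiv r \<beta> a b}"
  proof (rule inj_onI)
    fix b b' assume "b \<in> {b. tequiv r \<beta> a b}" "b' \<in> {b. tequiv r \<beta> a b}" "snd b = snd b'"
    then have "fst b x = fst b' x" for x
      using tequiv_tail_minus_head[of r \<beta> a b x] tequiv_tail_minus_head[of r \<beta> a b' x] by simp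
    then show "b = b'"
      using \<open>snd b = snd b'\<close> by (simp add: prod_eq_iff fun_eq_iff)
  qed
  have "snd ` {b. tequiv r \<beta> a b} \<subseteq> \<beta>"
    by (auto dest: tequiv_arrows simp: arrows_def)
  then show "finite (snd ` {b. tequiv r \<beta> a b})"
    using assms by (simp add: basis_set_def finite_subset)
qed

section \<open>The relations of U_beta modulo M^2\<close>

lemma hilb_rel_sum_eq:
  assumes bs: "basis_set r \<beta>" and l: "l \<in> \<beta>"
  shows "(\<Sum>j\<in>\<beta>. cvar (d, j) * cC \<beta> (vadd j (unitv i)) l :: 'k::comm_ring_1 cpoly) =
    (if 1 \<le> l i then cvar (d, vsub l (unitv i)) else 0) +
    (\<Sum>j\<in>\<beta> \<inter> - {j. vadd j (unitv i) \<in> \<beta>}. cvar (d, j) * cvar (vadd j (unitv i), l))"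
proof -
  have "finite \<beta>"
    using bs by (simp add: basis_set_def)
  have "(\<Sum>j\<in>\<beta>. cvar (d, j) * cC \<beta> (vadd j (unitv i)) l :: 'k cpoly) =
      (\<Sum>j\<in>\<beta>. if vadd j (unitv i) \<in> \<beta> then (if vadd j (unitv i) = l then cvar (d, j) else 0)
        else cvar (d, j) * cvar (vadd j (unitv i), l))"
    by (intro sum.cong) (auto simp: cC_def)
  also have "\<dots> =
      (\<Sum>j\<in>\<beta> \<inter> {j. vadd j (unitv i) \<in> \<beta>}. if vadd j (unitv i) = l then cvar (d, j) else 0) +
      (\<Sum>j\<in>\<beta> \<inter> - {j. vadd j (unitv i) \<in> \<beta>}. cvar (d, j) * cvar (vadd j (unitv i), l))"
    using \<open>finite \<beta>\<close> by (rule sum.If_cases)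
  also have "(\<Sum>j\<in>\<beta> \<inter> {j. vadd j (unitv i) \<in> \<beta>}. if vadd j (unitv i) = l then cvar (d, j) else 0) =
      (if 1 \<le> l i then cvar (d, vsub l (unitv i)) else 0 :: 'k cpoly)"
  proof (cases "1 \<le> l i")
    case True
    then have "vsub l (unitv i) \<in> \<beta> \<inter> {j. vadd j (unitv i) \<in> \<beta>}"
      using bs l by (simp add: basis_set_vsub_unitv vadd_vsub_unitv)
    with True \<open>finite \<beta>\<close> show ?thesis
      by (simp add: vadd_unitv_eq_iff if_distrib[of "\<lambda>b. b = _"] sum.delta')
  qed (simp add: vadd_unitv_eq_iff)
  finally show ?thesis .
qed

lemma Msq_preimage_eq_span:
  "Msq_preimage r \<beta> =
    ring_self.span (hilb_rels r \<beta> \<union> {p * q |p q. p \<in> pt_ideal r \<beta> \<and> q \<in> pt_ideal r \<beta>})"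
  unfolding Msq_preimage_def ideal_gen_eq_span ..

lemma cvar_mult_cvar_in_Msq_preimage:
  "(cvar x * cvar y :: 'k::comm_ring_1 cpoly) \<in> Msq_preimage r \<beta>"
proof (cases "x \<in> arrows r \<beta> \<and> y \<in> arrows r \<beta>")
  case True
  then have "cvar x \<in> pt_ideal r \<beta>" "cvar y \<in> pt_ideal r \<beta>"
    by (auto simp: pt_ideal_def ideal_gen_eq_span intro: ring_self.span_base)
  then show ?thesis
    unfolding Msq_preimage_eq_span by (blast intro: ring_self.span_base)
next
  case False
  then have "(cvar x :: 'k cpoly) \<in> Msq_preimage r \<beta> \<or> (cvar y :: 'k cpoly) \<in> Msq_preimage r \<beta>"
    unfolding Msq_preimage_eq_span hilb_rels_def by (blast intro: ring_self.span_base)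
  then show ?thesis
  proof
    assume "(cvar x :: 'k cpoly) \<in> Msq_preimage r \<beta>"
    then show ?thesis
      unfolding Msq_preimage_eq_span mult.commute[of "cvar x"] by (rule ring_self.span_scale)
  next
    assume "(cvar y :: 'k cpoly) \<in> Msq_preimage r \<beta>"
    then show ?thesis
      unfolding Msq_preimage_eq_span by (rule ring_self.span_scale)
  qed
qed

lemma linear_rel_in_Msq_preimage:
  assumes bs: "basis_set r \<beta>" and "d \<in> monoms r" "d \<notin> \<beta>" "i < r" and l: "l \<in> \<beta>"
  shows "(cvar (vadd d (unitv i), l) - (if 1 \<le> l i then cvar (d, vsub l (unitv i)) else 0)
    :: 'k::comm_ring_1 cpoly) \<in> Msq_preimage r \<beta>"
proof -
  let ?Q = "\<Sum>j\<in>\<beta> \<inter> - {j. vadd j (unitv i) \<in> \<beta>}. cvar (d, j) * cvar (vadd j (unitv i), l) :: 'k cpoly"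
  have "cvar (vadd d (unitv i), l) - (\<Sum>j\<in>\<beta>. cvar (d, j) * cC \<beta> (vadd j (unitv i)) l) \<in> hilb_rels r \<beta>"
    using assms unfolding hilb_rels_def by blast
  moreover have "?Q \<in> Msq_preimage r \<beta>"
    unfolding Msq_preimage_eq_span
    by (intro ring_self.span_sum) (simp flip: Msq_preimage_eq_span add: cvar_mult_cvar_in_Msq_preimage)
  ultimately have "cvar (vadd d (unitv i), l) - (\<Sum>j\<in>\<beta>. cvar (d, j) * cC \<beta> (vadd j (unitv i)) l) + ?Q
      \<in> Msq_preimage r \<beta>"
    unfolding Msq_preimage_eq_span by (blast intro: ring_self.span_add ring_self.span_base)
  then show ?thesis
    by (simp add: hilb_rel_sum_eq[OF bs l])
qed

lemma tstep_diff_in_Msq_preimage: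
  assumes bs: "basis_set r \<beta>" and step: "tstep r \<beta> a b"
  shows "(cvar a - cvar b :: 'k::comm_ring_1 cpoly) \<in> Msq_preimage r \<beta>"
proof -
  have up: "(cvar (vadd d (unitv i), vadd j (unitv i)) - cvar (d, j) :: 'k cpoly) \<in> Msq_preimage r \<beta>"
    if "(d, j) \<in> arrows r \<beta>" "i < r" "vadd j (unitv i) \<in> \<beta>" for d j i
    using linear_rel_in_Msq_preimage[OF bs _ _ \<open>i < r\<close> \<open>vadd j (unitv i) \<in> \<beta>\<close>, of d] that
    by (simp add: arrows_def vadd_unitv_same vsub_vadd_unitv)
  from step obtain i where "i < r" and translate:
    "b = (vadd (fst a) (unitv i), vadd (snd a) (unitv i)) \<or> a = (vadd (fst b) (unitv i), vadd (snd b) (unitv i))"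
    unfolding tstep_def by blast
  from translate show ?thesis
  proof
    assume "b = (vadd (fst a) (unitv i), vadd (snd a) (unitv i))"
    then have "(cvar b - cvar a :: 'k cpoly) \<in> Msq_preimage r \<beta>"
      using up[of "fst a" "snd a" i] step \<open>i < r\<close> by (auto simp: tstep_def arrows_def)
    then have "- (cvar b - cvar a) \<in> (Msq_preimage r \<beta> :: 'k cpoly set)"
      unfolding Msq_preimage_eq_span by (rule ring_self.span_neg)
    then show ?thesis
      by simp
  next
    assume "a = (vadd (fst b) (unitv i), vadd (snd b) (unitv i))"
    then show ?thesis
      using up[of "fst b" "snd b" i] step \<open>i < r\<close> by (auto simp: tstep_def arrows_def)
  qed
qed

lemma tequiv_diff_in_Msq_preimage:
  assumes bs: "basis_set r \<beta>" and "tequiv r \<beta> a b"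
  shows "(cvar a - cvar b :: 'k::comm_ring_1 cpoly) \<in> Msq_preimage r \<beta>"
proof -
  have "(tstep r \<beta>)\<^sup>*\<^sup>* a b"
    using assms by (simp add: tequiv_def)
  then show ?thesis
  proof (induction rule: rtranclp_induct)
    case base
    then show ?case
      unfolding Msq_preimage_eq_span by (simp add: ring_self.span_zero)
  next
    case (step b c)
    have "(cvar a - cvar b) + (cvar b - cvar c :: 'k cpoly) \<in> Msq_preimage r \<beta>"
      using step.IH tstep_diff_in_Msq_preimage[OF bs step.hyps(2)]
      unfolding Msq_preimage_eq_span by (rule ring_self.span_add)
    then show ?case
      by simp
  qed
qed

lemma sim0_cvar_in_Msq_preimage:
  assumes bs: "basis_set r \<beta>" and "sim0 r \<beta> c"
  shows "(cvar c :: 'k::comm_ring_1 cpoly) \<in> Msq_preimage r \<beta>"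
proof -
  obtain d' j' i where equiv: "tequiv r \<beta> c (d', j')" and "i < r" "j' i = 0" "1 \<le> d' i"
    and below: "vsub d' (unitv i) \<notin> \<beta>"
    using assms(2) unfolding sim0_def by blast
  have arrow: "(d', j') \<in> arrows r \<beta>"
    using tequiv_arrows[OF equiv] .
  have "(cvar (vadd (vsub d' (unitv i)) (unitv i), j') :: 'k cpoly) \<in> Msq_preimage r \<beta>"
    using linear_rel_in_Msq_preimage[OF bs _ below \<open>i < r\<close>, of j'] arrow \<open>j' i = 0\<close>
    by (simp add: arrows_def vsub_unitv_monoms)
  then have "(cvar (d', j') :: 'k cpoly) \<in> Msq_preimage r \<beta>"
    using \<open>1 \<le> d' i\<close> by (simp add: vadd_vsub_unitv)
  moreover have "(cvar c - cvar (d', j') :: 'k cpoly) \<in> Msq_preimage r \<beta>"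
    using tequiv_diff_in_Msq_preimage[OF bs equiv] .
  ultimately have "(cvar c - cvar (d', j')) + cvar (d', j') \<in> (Msq_preimage r \<beta> :: 'k cpoly set)"
    unfolding Msq_preimage_eq_span by (rule ring_self.span_add[rotated])
  then show ?thesis
    by simp
qed

lemma cotangent_indep_imp_not_sim0:
  assumes bs: "basis_set r \<beta>" and "finite S" and indep: "cotangent_indep TYPE('k::field) r \<beta> S"
    and "c \<in> S"
  shows "\<not> sim0 r \<beta> c"
proof
  assume "sim0 r \<beta> c"
  let ?coef = "\<lambda>a. if a = c then 1 else 0 :: 'k"
  have "(\<Sum>a\<in>S. cconst (?coef a) * cvar a :: 'k cpoly) = (\<Sum>a\<in>S. if a = c then cvar a else 0)"
    by (intro sum.cong) (auto simp: cconst_def)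
  also have "\<dots> = cvar c"
    using \<open>finite S\<close> \<open>c \<in> S\<close> by simp
  finally have "(\<Sum>a\<in>S. cconst (?coef a) * cvar a :: 'k cpoly) \<in> Msq_preimage r \<beta>"
    using sim0_cvar_in_Msq_preimage[OF bs \<open>sim0 r \<beta> c\<close>] by simp
  then have "?coef c = 0"
    by (rule indep[unfolded cotangent_indep_def, rule_format, OF _ \<open>c \<in> S\<close>])
  then show False
    by simp
qed

lemma cotangent_indep_imp_not_tequiv:
  assumes bs: "basis_set r \<beta>" and "finite S" and indep: "cotangent_indep TYPE('k::field) r \<beta> S"
    and "c1 \<in> S" "c2 \<in> S" "c1 \<noteq> c2"
  shows "\<not> tequiv r \<beta> c1 c2"
proof
  assume "tequiv r \<beta> c1 c2"
  let ?coef = "\<lambda>a. if a = c1 then 1 else if a = c2 then -1 else 0 :: 'k"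
  have "(\<Sum>a\<in>S. cconst (?coef a) * cvar a :: 'k cpoly) =
      (\<Sum>a\<in>S. (if a = c1 then cvar a else 0) - (if a = c2 then cvar a else 0))"
    using \<open>c1 \<noteq> c2\<close> by (intro sum.cong) (auto simp: cconst_def single_uminus)
  also have "\<dots> = cvar c1 - cvar c2"
    using \<open>finite S\<close> \<open>c1 \<in> S\<close> \<open>c2 \<in> S\<close> by (simp add: sum_subtractf)
  finally have "(\<Sum>a\<in>S. cconst (?coef a) * cvar a :: 'k cpoly) \<in> Msq_preimage r \<beta>"
    using tequiv_diff_in_Msq_preimage[OF bs \<open>tequiv r \<beta> c1 c2\<close>] by simp
  then have "?coef c1 = 0"
    by (rule indep[unfolded cotangent_indep_def, rule_format, OF _ \<open>c1 \<in> S\<close>])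
  then show False
    by simp
qed

section \<open>Tangent vectors supported on a translation class\<close>

lemma lookup_0_hilb_rels: "g \<in> hilb_rels r \<beta> \<Longrightarrow> Poly_Mapping.lookup (g :: 'k::comm_ring_1 cpoly) 0 = 0"
  unfolding hilb_rels_def by (auto simp: lookup_minus lookup_sum lookup_mult_0 lookup_cvar_0)

lemma lin_coeff_class_hilb_rel:
  assumes bs: "basis_set r \<beta>" and no0: "\<not> sim0 r \<beta> a"
    and d: "d \<in> monoms r" "d \<notin> \<beta>" and i: "i < r" and l: "l \<in> \<beta>"
  shows "lin_coeff {b. tequiv r \<beta> a b}
    (cvar (vadd d (unitv i), l) - (\<Sum>j\<in>\<beta>. cvar (d, j) * cC \<beta> (vadd j (unitv i)) l) :: 'k::comm_ring_1 cpoly) = 0"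
proof -
  define C where "C = {b. tequiv r \<beta> a b}"
  let ?x = "(vadd d (unitv i), l)" and ?y = "(d, vsub l (unitv i))"
  have fin: "finite C"
    unfolding C_def using bs by (rule tequiv_class_finite)
  have quadratic: "lin_coeff C (\<Sum>j\<in>\<beta> \<inter> - {j. vadd j (unitv i) \<in> \<beta>}.
      cvar (d, j) * cvar (vadd j (unitv i), l) :: 'k cpoly) = 0"
    by (simp add: lin_coeff_sum lin_coeff_mult lookup_cvar_0)
  have linear: "lin_coeff C (cvar ?x :: 'k cpoly) = lin_coeff C (if 1 \<le> l i then cvar ?y else 0)"
  proof (cases "1 \<le> l i")
    case True
    have "tstep r \<beta> ?y ?x"
      unfolding tstep_def arrows_def
      using bs d i l True
      by (auto simp: basis_set_vsub_unitv vadd_unitv_monoms basis_set_vadd_unitv_notin vadd_vsub_unitv)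
    then have "?x \<in> C \<longleftrightarrow> ?y \<in> C"
      unfolding C_def using tequiv_tstep_iff by blast
    then show ?thesis
      using True fin by (simp add: lin_coeff_cvar)
  next
    case False
    have "?x \<notin> C"
    proof
      assume "?x \<in> C"
      then have "sim0 r \<beta> a"
        unfolding C_def sim0_def using False d(2) i
        by (intro exI[of _ "vadd d (unitv i)"] exI[of _ l]) (auto simp: vadd_unitv_same vsub_vadd_unitv)
      with no0 show False ..
    qed
    then show ?thesis
      using False fin by (simp add: lin_coeff_cvar)
  qed
  show ?thesis
    unfolding C_def[symmetric] hilb_rel_sum_eq[OF bs l]
    by (simp add: lin_coeff_diff lin_coeff_add linear quadratic)
qed

lemma lin_coeff_class_Msq_preimage:
  assumes bs: "basis_set r \<beta>" and no0: "\<not> sim0 r \<beta> a" and p: "p \<in> Msq_preimage r \<beta>"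
  shows "lin_coeff {b. tequiv r \<beta> a b} (p :: 'k::comm_ring_1 cpoly) = 0"
proof -
  define C where "C = {b. tequiv r \<beta> a b}"
  have fin: "finite C"
    unfolding C_def using bs by (rule tequiv_class_finite)
  have pt_ideal_0: "Poly_Mapping.lookup q 0 = 0" if "q \<in> pt_ideal r \<beta>" for q :: "'k cpoly"
    using that unfolding pt_ideal_def by (rule lookup_0_ideal_gen[rotated]) (auto simp: lookup_cvar_0)
  have "Poly_Mapping.lookup g 0 = 0 \<and> lin_coeff C g = 0"
    if "g \<in> hilb_rels r \<beta> \<union> {p * q |p q. p \<in> pt_ideal r \<beta> \<and> q \<in> pt_ideal r \<beta>}" for g :: "'k cpoly"
    using that
  proof (elim UnE)
    assume g: "g \<in> hilb_rels r \<beta>"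
    have "lin_coeff C g = 0"
      using g unfolding hilb_rels_def
    proof (elim UnE CollectE exE conjE)
      fix d i l
      assume "g = cvar (vadd d (unitv i), l) - (\<Sum>j\<in>\<beta>. cvar (d, j) * cC \<beta> (vadd j (unitv i)) l)"
        "d \<in> monoms r" "d \<notin> \<beta>" "i < r" "l \<in> \<beta>"
      then show ?thesis
        unfolding C_def using lin_coeff_class_hilb_rel[OF bs no0] by blast
    next
      fix v
      assume "g = cvar v" "v \<notin> arrows r \<beta>"
      then have "v \<notin> C"
        unfolding C_def using tequiv_arrows by blast
      then show ?thesis
        using fin \<open>g = cvar v\<close> by (simp add: lin_coeff_cvar)
    qed
    then show ?thesis
      using lookup_0_hilb_rels[OF g] by simp
  next
    assume "g \<in> {p * q |p q. p \<in> pt_ideal r \<beta> \<and> q \<in> pt_ideal r \<beta>}"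
    then show ?thesis
      using pt_ideal_0 by (auto simp: lookup_mult_0 lin_coeff_mult)
  qed
  then show ?thesis
    using p unfolding C_def[symmetric] Msq_preimage_def by (rule lin_coeff_ideal_gen)
qed

lemma not_sim0_not_tequiv_imp_cotangent_indep:
  assumes bs: "basis_set r \<beta>" and "finite S" and "S \<subseteq> arrows r \<beta>"
    and no0: "\<forall>c\<in>S. \<not> sim0 r \<beta> c"
    and inequiv: "\<forall>c1\<in>S. \<forall>c2\<in>S. c1 \<noteq> c2 \<longrightarrow> \<not> tequiv r \<beta> c1 c2"
  shows "cotangent_indep TYPE('k::field) r \<beta> S"
  unfolding cotangent_indep_def
proof (intro allI impI ballI)
  fix coef :: "expv \<times> expv \<Rightarrow> 'k" and c
  assume mem: "(\<Sum>a\<in>S. cconst (coef a) * cvar a) \<in> Msq_preimage r \<beta>" and "c \<in> S"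
  define C where "C = {b. tequiv r \<beta> c b}"
  have "finite C"
    unfolding C_def using bs by (rule tequiv_class_finite)
  have class_in_S: "a \<in> C \<longleftrightarrow> a = c" if "a \<in> S" for a
  proof
    show "a \<in> C \<Longrightarrow> a = c"
      using inequiv \<open>c \<in> S\<close> \<open>a \<in> S\<close> unfolding C_def by auto
    show "a = c \<Longrightarrow> a \<in> C"
      using \<open>S \<subseteq> arrows r \<beta>\<close> \<open>c \<in> S\<close> tequiv_refl unfolding C_def by blast
  qed
  have "0 = lin_coeff C (\<Sum>a\<in>S. cconst (coef a) * cvar a)"
    unfolding C_def using lin_coeff_class_Msq_preimage[OF bs _ mem] no0 \<open>c \<in> S\<close> by simp
  also have "\<dots> = (\<Sum>a\<in>S. if a = c then coef a else 0)"
    using \<open>finite C\<close> class_in_S by (simp add: lin_coeff_sum lin_coeff_cconst_mult_cvar)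
  also have "\<dots> = coef c"
    using \<open>finite S\<close> \<open>c \<in> S\<close> by simp
  finally show "coef c = 0" ..
qed

theorem theorem3p2:
  fixes r :: nat and \<beta> :: "expv set" and S :: "(expv \<times> expv) set"
  assumes "basis_set r \<beta>"
    and "finite S"
    and "S \<subseteq> arrows r \<beta>"
  shows "cotangent_indep TYPE('k::alg_closed_field) r \<beta> S \<longleftrightarrow>
           ((\<forall>c\<in>S. \<not> sim0 r \<beta> c) \<and>
            (\<forall>c1\<in>S. \<forall>c2\<in>S. c1 \<noteq> c2 \<longrightarrow> \<not> tequiv r \<beta> c1 c2))"
proof
  assume "cotangent_indep TYPE('k) r \<beta> S"
  then show "(\<forall>c\<in>S. \<not> sim0 r \<beta> c) \<and> (\<forall>c1\<in>S. \<forall>c2\<in>S. c1 \<noteq> c2 \<longrightarrow> \<not> tequiv r \<beta> c1 c2)"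
    using cotangent_indep_imp_not_sim0[OF assms(1,2)] cotangent_indep_imp_not_tequiv[OF assms(1,2)]
    by blast
next
  assume "(\<forall>c\<in>S. \<not> sim0 r \<beta> c) \<and> (\<forall>c1\<in>S. \<forall>c2\<in>S. c1 \<noteq> c2 \<longrightarrow> \<not> tequiv r \<beta> c1 c2)"
  then show "cotangent_indep TYPE('k) r \<beta> S"
    using not_sim0_not_tequiv_imp_cotangent_indep[OF assms] by blast
qed

end
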